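(* Let $\phi:\mathbf{R}^n\to\mathbf{R}$ be a uniformly convex norm of class $\mathcal{C}^2$ on $\mathbf{R}^n\setminus\{0\}$, let $K\subseteq\mathbf{R}^n$ be closed, let $1<\sigma<\infty$ and $0<s<t<\infty$, and set $$K_{\sigma,s,t}=\bigl\{a+\rho\eta:(a,\eta)\in N^\phi(K),\ s\le\rho\le t,\ \sigma\rho\le r^\phi_K(a,\eta)\bigr\}.$$ Then $\delta^\phi_K$ is differentiable at every point of $K_{\sigma,s,t}$ and $\nabla\delta^\phi_K|K_{\sigma,s,t}$ is Lipschitz continuous.
   Context: A norm $\phi$ on $\mathbf{R}^n$ is uniformly convex if there is $\gamma>0$ such that $x\mapsto\phi(x)-\gamma|x|$ is convex ($|\cdot|$ the Euclidean norm). For closed $K\subseteq\mathbf{R}^n$: $\delta^\phi_K(x)=\inf\{\phi(y-x):y\in K\}$; $N^\phi(K)=\{(a,\eta)\in\mathbf{R}^n\times\mathbf{R}^n: a\in K,\ \phi(\eta)=1,\ \delta^\phi_K(a+s\eta)=s\text{ for some }s>0\}$; and $r^\phi_K(a,\eta)=\sup\{s>0:\delta^\phi_K(a+s\eta)=s\}\in(0,\infty]$ for $(a,\eta)\in N^\phi(K)$. *)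

theory Defs
  imports "HOL-Analysis.Analysis"
begin

definition is_norm :: "(real^'n \<Rightarrow> real) \<Rightarrow> bool" where
  "is_norm \<phi> \<longleftrightarrow> (\<forall>x. 0 \<le> \<phi> x) \<and> (\<forall>x. \<phi> x = 0 \<longleftrightarrow> x = 0)
     \<and> (\<forall>c x. \<phi> (c *\<^sub>R x) = \<bar>c\<bar> * \<phi> x) \<and> (\<forall>x y. \<phi> (x + y) \<le> \<phi> x + \<phi> y)"

definition uniformly_convex_norm :: "(real^'n \<Rightarrow> real) \<Rightarrow> bool" where
  "uniformly_convex_norm \<phi> \<longleftrightarrow> is_norm \<phi> \<and>
     (\<exists>\<gamma>>0. convex_on UNIV (\<lambda>x. \<phi> x - \<gamma> * norm x))"

definition C2_on :: "(real^'n \<Rightarrow> real) \<Rightarrow> (real^'n) set \<Rightarrow> bool" where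
  "C2_on f U \<longleftrightarrow> (\<exists>(g :: real^'n \<Rightarrow> real^'n) (H :: real^'n \<Rightarrow> ((real^'n) \<Rightarrow>\<^sub>L (real^'n))).
      (\<forall>x\<in>U. (f has_derivative (\<lambda>h. g x \<bullet> h)) (at x)) \<and>
      (\<forall>x\<in>U. (g has_derivative blinfun_apply (H x)) (at x)) \<and>
      continuous_on U H)"

definition delta :: "(real^'n \<Rightarrow> real) \<Rightarrow> (real^'n) set \<Rightarrow> real^'n \<Rightarrow> real" where
  "delta \<phi> K x = Inf {\<phi> (y - x) | y. y \<in> K}"

definition normal_bundle :: "(real^'n \<Rightarrow> real) \<Rightarrow> (real^'n) set \<Rightarrow> ((real^'n) \<times> (real^'n)) set" where
  "normal_bundle \<phi> K = {(a, \<eta>). a \<in> K \<and> \<phi> \<eta> = 1 \<and>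
      (\<exists>s>0. delta \<phi> K (a + s *\<^sub>R \<eta>) = s)}"

definition reach :: "(real^'n \<Rightarrow> real) \<Rightarrow> (real^'n) set \<Rightarrow> real^'n \<Rightarrow> real^'n \<Rightarrow> ereal" where
  "reach \<phi> K a \<eta> = Sup (ereal ` {s. s > 0 \<and> delta \<phi> K (a + s *\<^sub>R \<eta>) = s})"

definition Kset :: "(real^'n \<Rightarrow> real) \<Rightarrow> (real^'n) set \<Rightarrow> real \<Rightarrow> real \<Rightarrow> real \<Rightarrow> (real^'n) set" where
  "Kset \<phi> K \<sigma> s t = {a + \<rho> *\<^sub>R \<eta> | a \<eta> \<rho>. (a, \<eta>) \<in> normal_bundle \<phi> K \<and>
      s \<le> \<rho> \<and> \<rho> \<le> t \<and> ereal (\<sigma> * \<rho>) \<le> reach \<phi> K a \<eta>}"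

end

theory Submission
  imports Defs
begin

(* At x = a + \<rho>\<eta> the distance function is squeezed between two translates of the norm
   that agree with it at x: from above by y \<mapsto> \<phi>(y - a), since a \<in> K, and from below by
   y \<mapsto> \<rho>' - \<phi>(y - b) with b = a + \<rho>'\<eta>, since for \<rho>' < \<sigma>\<rho> the point b still has
   distance \<rho>' from K. As \<phi> is C^2 away from 0,
   \<phi> v \<le> \<phi> u + \<nabla>\<phi> u \<bullet> (v - u) + C |v - u|^2
   with C uniform over a shell of \<phi>-radii bounded away from 0. At u = x - a and u = x - b
   this traps delta between two quadratics touching at x, which forces a common gradient
   G x with |delta y - delta x - G x \<bullet> (y - x)| \<le> C |y - x|^2; such a uniform
   second-order bound gives differentiability and a Lipschitz gradient. *)

lemma gradient_lipschitz_quadratic_upper_bound: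
  fixes f :: "'a::real_inner \<Rightarrow> real"
  assumes S: "convex S" "u \<in> S" "v \<in> S"
    and f': "\<And>w. w \<in> S \<Longrightarrow> (f has_derivative (\<lambda>h. g w \<bullet> h)) (at w within S)"
    and g': "\<And>w. w \<in> S \<Longrightarrow> (g has_derivative g'' w) (at w within S)"
    and bound: "\<And>w. w \<in> S \<Longrightarrow> onorm (g'' w) \<le> B"
  shows "f v - f u - g u \<bullet> (v - u) \<le> B * (norm (v - u))^2"
proof -
  have B: "0 \<le> B"
    using onorm_pos_le[OF has_derivative_bounded_linear[OF g'[OF S(2)]]] bound[OF S(2)] by linarith
  have seg: "closed_segment u v \<subseteq> S"
    using S by (simp add: closed_segment_subset)
  have g_near: "norm (g w - g u) \<le> B * norm (v - u)" if w: "w \<in> closed_segment u v" for w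
  proof -
    have "norm (g w - g u) \<le> B * norm (w - u)"
      using differentiable_bound[OF S(1) g' bound] w seg S(2) by blast
    also have "\<dots> \<le> B * norm (v - u)"
      using segment_bound1[OF w] B by (rule mult_left_mono)
    finally show ?thesis .
  qed
  define F where "F w = f w - g u \<bullet> w" for w
  have "norm (F v - F u) \<le> (B * norm (v - u)) * norm (v - u)"
  proof (rule differentiable_bound[of "closed_segment u v" F "\<lambda>w h. (g w - g u) \<bullet> h"])
    show "(F has_derivative (\<lambda>h. (g w - g u) \<bullet> h)) (at w within closed_segment u v)"
      if "w \<in> closed_segment u v" for w
    proof -
      have "(F has_derivative (\<lambda>h. g w \<bullet> h - g u \<bullet> h)) (at w within S)"
        unfolding F_def using f' that seg
        by (intro has_derivative_diff bounded_linear.has_derivative[OF bounded_linear_inner_right]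
            has_derivative_ident) auto
      then show ?thesis
        by (auto intro: has_derivative_subset[OF _ seg] simp: inner_diff_left)
    qed
    show "onorm (\<lambda>h. (g w - g u) \<bullet> h) \<le> B * norm (v - u)" if "w \<in> closed_segment u v" for w
    proof (rule onorm_bound)
      show "0 \<le> B * norm (v - u)" using B by simp
      fix h
      have "norm ((g w - g u) \<bullet> h) \<le> norm (g w - g u) * norm h"
        by (simp add: Cauchy_Schwarz_ineq2)
      also have "\<dots> \<le> B * norm (v - u) * norm h"
        using g_near[OF that] by (simp add: mult_right_mono)
      finally show "norm ((g w - g u) \<bullet> h) \<le> B * norm (v - u) * norm h" .
    qed
  qed auto
  then show ?thesis
    by (simp add: F_def inner_diff_right power2_eq_square algebra_simps)
qed

lemma lipschitz_quadratic_upper_bound_far: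
  fixes f :: "'a::real_inner \<Rightarrow> real"
  assumes lip: "f v - f u \<le> L * norm (v - u)" and G: "norm (g u) \<le> G"
    and c: "0 < c" "c \<le> norm (v - u)"
  shows "f v \<le> f u + g u \<bullet> (v - u) + (\<bar>L\<bar> + G) / c * (norm (v - u))^2"
proof -
  have "- (g u \<bullet> (v - u)) \<le> norm (g u) * norm (v - u)"
    using norm_cauchy_schwarz[of "g u" "u - v"] by (simp add: inner_diff_right norm_minus_commute)
  also have "\<dots> \<le> G * norm (v - u)"
    using G by (rule mult_right_mono) simp
  finally have "f v - f u - g u \<bullet> (v - u) \<le> (\<bar>L\<bar> + G) * norm (v - u)"
    using lip abs_ge_self[of L] mult_right_mono[of L "\<bar>L\<bar>" "norm (v - u)"]
    by (simp add: algebra_simps)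
  also have "\<dots> = (\<bar>L\<bar> + G) / c * (c * norm (v - u))"
    using c by simp
  also have "\<dots> \<le> (\<bar>L\<bar> + G) / c * (norm (v - u))^2"
    using c order_trans[OF norm_ge_zero G] unfolding power2_eq_square
    by (intro mult_left_mono mult_right_mono) auto
  finally show ?thesis by simp
qed

lemma quadratic_upper_bound_on_annulus:
  fixes f :: "'a::euclidean_space \<Rightarrow> real"
  assumes lip: "\<And>x y. f y - f x \<le> L * norm (y - x)"
    and f': "\<And>x. x \<noteq> 0 \<Longrightarrow> (f has_derivative (\<lambda>h. g x \<bullet> h)) (at x)"
    and g': "\<And>x. x \<noteq> 0 \<Longrightarrow> (g has_derivative blinfun_apply (H x)) (at x)"
    and H: "continuous_on (- {0}) H" and r: "0 < r"
  obtains C where "\<And>u v. r \<le> norm u \<Longrightarrow> norm u \<le> R \<Longrightarrow>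
      f v \<le> f u + g u \<bullet> (v - u) + C * (norm (v - u))^2"
proof -
  define c where "c = r / 2"
  have c: "0 < c" using r by (simp add: c_def)
  define Q :: "'a set" where "Q = cball 0 (R + c) - ball 0 c"
  have Q: "compact Q" "Q \<subseteq> - {0}"
    using c by (auto simp: Q_def intro!: compact_diff compact_cball)
  have "compact (H ` Q)"
    using Q H by (intro compact_continuous_image) (auto intro: continuous_on_subset)
  then obtain B where B: "\<And>w. w \<in> Q \<Longrightarrow> norm (H w) \<le> B"
    using compact_imp_bounded[of "H ` Q"] unfolding bounded_iff by auto
  have "continuous_on Q g"
    using Q g' by (intro continuous_at_imp_continuous_on ballI has_derivative_continuous) blast
  then have "compact (g ` Q)" using Q by (intro compact_continuous_image)
  then obtain G where G: "\<And>w. w \<in> Q \<Longrightarrow> norm (g w) \<le> G"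
    using compact_imp_bounded[of "g ` Q"] unfolding bounded_iff by auto
  define C where "C = max B ((\<bar>L\<bar> + \<bar>G\<bar>) / c)"
  show ?thesis
  proof (rule that[of C])
    fix u v :: 'a assume u: "r \<le> norm u" "norm u \<le> R"
    show "f v \<le> f u + g u \<bullet> (v - u) + C * (norm (v - u))^2"
    proof (cases "norm (v - u) \<le> c")
      case True
      have inQ: "w \<in> Q" "w \<noteq> 0" if "w \<in> cball u c" for w
      proof -
        have "norm (w - u) \<le> c" using that by (simp add: dist_norm norm_minus_commute)
        then show "w \<in> Q"
          using u norm_triangle_ineq2[of w u] norm_triangle_ineq2[of u w]
          by (auto simp: Q_def c_def norm_minus_commute)
        then show "w \<noteq> 0" using Q(2) by auto
      qed
      have "f v - f u - g u \<bullet> (v - u) \<le> B * (norm (v - u))^2"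
        using True c f' g' B inQ
        by (intro gradient_lipschitz_quadratic_upper_bound[where S = "cball u c"
              and g'' = "\<lambda>w. blinfun_apply (H w)"])
          (auto intro: has_derivative_at_withinI simp: dist_norm norm_minus_commute norm_blinfun.rep_eq[symmetric])
      moreover have "B * (norm (v - u))^2 \<le> C * (norm (v - u))^2"
        by (intro mult_right_mono) (auto simp: C_def)
      ultimately show ?thesis by simp
    next
      case False
      have "norm (g u) \<le> \<bar>G\<bar>"
        using G[of u] u c by (auto simp: Q_def c_def)
      with False c have "f v \<le> f u + g u \<bullet> (v - u) + (\<bar>L\<bar> + \<bar>G\<bar>) / c * (norm (v - u))^2"
        by (intro lipschitz_quadratic_upper_bound_far lip) auto
      moreover have "(\<bar>L\<bar> + \<bar>G\<bar>) / c * (norm (v - u))^2 \<le> C * (norm (v - u))^2"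
        by (intro mult_right_mono) (auto simp: C_def)
      ultimately show ?thesis by simp
    qed
  qed
qed

lemma inner_le_quadratic_imp_eq_0:
  fixes w :: "'a::real_inner"
  assumes "\<And>h. w \<bullet> h \<le> C * (norm h)^2"
  shows "w = 0"
proof -
  define D where "D = max C 1"
  have D: "0 < D" by (simp add: D_def)
  have "w \<bullet> h \<le> D * (norm h)^2" for h
    using assms[of h] mult_right_mono[of C D "(norm h)^2"] by (simp add: D_def)
  from this[of "(1 / (2 * D)) *\<^sub>R w"] have "(norm w)^2 \<le> 0"
    using D by (simp add: dot_square_norm power_mult_distrib field_simps power2_eq_square)
  then show ?thesis
    by simp
qed

lemma quadratic_sandwich:
  fixes f :: "'a::real_inner \<Rightarrow> real"
  assumes upper: "\<And>y. f y \<le> f x + p \<bullet> (y - x) + C * (norm (y - x))^2"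
    and lower: "\<And>y. f x + q \<bullet> (y - x) - C * (norm (y - x))^2 \<le> f y"
  shows "\<bar>f y - f x - p \<bullet> (y - x)\<bar> \<le> C * (norm (y - x))^2"
proof -
  have "(q - p) \<bullet> h \<le> (2 * C) * (norm h)^2" for h
    using upper[of "x + h"] lower[of "x + h"] by (simp add: inner_diff_left)
  then have "q = p"
    using inner_le_quadratic_imp_eq_0[of "q - p" "2 * C"] by simp
  then show ?thesis
    using upper[of y] lower[of y] by (simp add: abs_le_iff)
qed

lemma has_derivative_if_quadratic_approx:
  fixes f :: "'a::real_inner \<Rightarrow> real"
  assumes "\<And>y. \<bar>f y - f x - G \<bullet> (y - x)\<bar> \<le> C * (norm (y - x))^2"
  shows "(f has_derivative (\<lambda>h. G \<bullet> h)) (at x)"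
  unfolding has_derivative_at
proof
  show "bounded_linear ((\<bullet>) G)" by (rule bounded_linear_inner_right)
  show "(\<lambda>h. norm (f (x + h) - f x - G \<bullet> h) / norm h) \<midarrow>0\<rightarrow> 0"
  proof (rule Lim_null_comparison)
    show "\<forall>\<^sub>F h in at 0. norm (norm (f (x + h) - f x - G \<bullet> h) / norm h) \<le> C * norm h"
    proof (rule eventually_mono)
      show "\<forall>\<^sub>F h in at (0::'a). h \<noteq> 0" by (simp add: eventually_at_filter)
      fix h :: 'a assume "h \<noteq> 0"
      then show "norm (norm (f (x + h) - f x - G \<bullet> h) / norm h) \<le> C * norm h"
        using assms[of "x + h"] by (simp add: divide_le_eq power2_eq_square mult.assoc)
    qed
    show "((\<lambda>h. C * norm h) \<longlongrightarrow> 0) (at 0)"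
      by (rule tendsto_eq_intros | simp)+
  qed
qed

lemma lipschitz_on_if_quadratic_approx:
  fixes f :: "'a::real_inner \<Rightarrow> real"
  assumes approx: "\<And>x y. x \<in> S \<Longrightarrow> \<bar>f y - f x - G x \<bullet> (y - x)\<bar> \<le> C * (norm (y - x))^2"
    and C: "0 \<le> C"
  shows "(6 * C)-lipschitz_on S G"
proof (rule lipschitz_onI)
  fix x x' assume x: "x \<in> S" and x': "x' \<in> S"
  define d where "d = norm (x' - x)"
  define w where "w = G x' - G x"
  have three_points: "w \<bullet> h \<le> C * ((norm (x' + h - x))^2 + (norm h)^2 + d^2)" for h
    using approx[OF x, of "x' + h"] approx[OF x', of "x' + h"] approx[OF x, of x']
    by (simp add: w_def d_def inner_diff_left inner_diff_right algebra_simps abs_le_iff)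
  show "dist (G x) (G x') \<le> 6 * C * dist x x'"
  proof (cases "w = 0")
    case False
    define h where "h = (d / norm w) *\<^sub>R w"
    have h: "norm h = d" "w \<bullet> h = d * norm w"
      using False by (simp_all add: h_def d_def dot_square_norm power2_eq_square)
    have "norm (x' + h - x) \<le> 2 * d"
      using norm_triangle_ineq[of h "x' - x"] h by (simp add: d_def algebra_simps)
    then have "(norm (x' + h - x))^2 \<le> 4 * d^2"
      using power_mono[of _ "2 * d" 2] by (simp add: power_mult_distrib)
    then have "C * (norm (x' + h - x))^2 \<le> C * (4 * d^2)"
      using C by (rule mult_left_mono)
    then have "d * norm w \<le> d * (6 * C * d)"
      using three_points[of h] h by (simp add: power2_eq_square algebra_simps)
    moreover have "0 < d"
      using False by (auto simp: d_def w_def)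
    ultimately show ?thesis
      by (simp add: w_def d_def dist_norm norm_minus_commute)
  qed (use C in \<open>simp add: w_def\<close>)
qed (use C in simp)

lemma is_norm_nonneg: "is_norm \<phi> \<Longrightarrow> 0 \<le> \<phi> x"
  unfolding is_norm_def by blast

lemma is_norm_eq_0_iff: "is_norm \<phi> \<Longrightarrow> \<phi> x = 0 \<longleftrightarrow> x = 0"
  unfolding is_norm_def by blast

lemma is_norm_scaleR: "is_norm \<phi> \<Longrightarrow> \<phi> (c *\<^sub>R x) = \<bar>c\<bar> * \<phi> x"
  unfolding is_norm_def by blast

lemma is_norm_triangle: "is_norm \<phi> \<Longrightarrow> \<phi> (x + y) \<le> \<phi> x + \<phi> y"
  unfolding is_norm_def by blast

lemma is_norm_minus_commute: "is_norm \<phi> \<Longrightarrow> \<phi> (x - y) = \<phi> (y - x)"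
  using is_norm_scaleR[of \<phi> "- 1" "y - x"] by simp

lemma convex_on_is_norm:
  assumes "is_norm \<phi>"
  shows "convex_on UNIV \<phi>"
proof (rule convex_onI[OF _ convex_UNIV])
  fix t :: real and x y assume t: "0 < t" "t < 1"
  have "\<phi> ((1 - t) *\<^sub>R x + t *\<^sub>R y) \<le> \<phi> ((1 - t) *\<^sub>R x) + \<phi> (t *\<^sub>R y)"
    by (rule is_norm_triangle[OF assms])
  also have "\<dots> = (1 - t) * \<phi> x + t * \<phi> y"
    using t by (simp add: is_norm_scaleR[OF assms])
  finally show "\<phi> ((1 - t) *\<^sub>R x + t *\<^sub>R y) \<le> (1 - t) * \<phi> x + t * \<phi> y" .
qed

lemma is_norm_equiv_norm:
  fixes \<phi> :: "real^'n \<Rightarrow> real"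
  assumes N: "is_norm \<phi>"
  obtains c1 c2 where "0 < c1" "0 < c2" "\<And>x. c1 * norm x \<le> \<phi> x" "\<And>x. \<phi> x \<le> c2 * norm x"
proof -
  have cont: "continuous_on (sphere 0 1) \<phi>"
    using convex_on_continuous[OF open_UNIV convex_on_is_norm[OF N]] continuous_on_subset by blast
  have ne: "sphere (0::real^'n) 1 \<noteq> {}" by simp
  obtain p where p: "p \<in> sphere 0 1" "\<And>y. y \<in> sphere 0 1 \<Longrightarrow> \<phi> p \<le> \<phi> y"
    using continuous_attains_inf[OF compact_sphere ne cont] by blast
  obtain q where q: "q \<in> sphere 0 1" "\<And>y. y \<in> sphere 0 1 \<Longrightarrow> \<phi> y \<le> \<phi> q"
    using continuous_attains_sup[OF compact_sphere ne cont] by blast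
  have homogeneous: "\<phi> x = norm x * \<phi> (inverse (norm x) *\<^sub>R x)" for x
    by (cases "x = 0") (simp_all add: is_norm_scaleR[OF N] is_norm_eq_0_iff[OF N])
  show ?thesis
  proof (rule that[of "\<phi> p" "\<phi> q"])
    show "0 < \<phi> p"
      using p(1) is_norm_nonneg[OF N, of p] is_norm_eq_0_iff[OF N, of p] by force
    then show "0 < \<phi> q"
      using p(1) q(2) by fastforce
    show "\<phi> p * norm x \<le> \<phi> x" and "\<phi> x \<le> \<phi> q * norm x" for x
    proof -
      have "\<phi> p \<le> \<phi> (inverse (norm x) *\<^sub>R x)" "\<phi> (inverse (norm x) *\<^sub>R x) \<le> \<phi> q" if "x \<noteq> 0"
        using p(2) q(2) that by simp_all
      then show "\<phi> p * norm x \<le> \<phi> x" and "\<phi> x \<le> \<phi> q * norm x"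
        using homogeneous[of x] is_norm_eq_0_iff[OF N, of x]
        by (metis mult.commute mult_left_mono norm_eq_zero norm_ge_zero order_refl mult_zero_left)+
    qed
  qed
qed

lemma is_norm_quadratic_upper_bound:
  fixes \<phi> :: "real^'n \<Rightarrow> real"
  assumes N: "is_norm \<phi>" and C2: "C2_on \<phi> (- {0})" and m: "0 < m"
  obtains g C where "0 < C" "\<And>u v. m \<le> \<phi> u \<Longrightarrow> \<phi> u \<le> M \<Longrightarrow>
      \<phi> v \<le> \<phi> u + g u \<bullet> (v - u) + C * (norm (v - u))^2"
proof -
  obtain g :: "real^'n \<Rightarrow> real^'n" and H
    where f': "\<And>x. x \<noteq> 0 \<Longrightarrow> (\<phi> has_derivative (\<lambda>h. g x \<bullet> h)) (at x)"
      and g': "\<And>x. x \<noteq> 0 \<Longrightarrow> (g has_derivative blinfun_apply (H x)) (at x)"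
      and H: "continuous_on (- {0}) H"
    using C2 unfolding C2_on_def by blast
  obtain c1 c2 where c1: "0 < c1" and c2: "0 < c2"
    and lower: "\<And>x. c1 * norm x \<le> \<phi> x" and upper: "\<And>x. \<phi> x \<le> c2 * norm x"
    using is_norm_equiv_norm[OF N] by metis
  have lip: "\<phi> y - \<phi> x \<le> c2 * norm (y - x)" for x y
    using is_norm_triangle[OF N, of x "y - x"] upper[of "y - x"] by simp
  have "0 < m / c2"
    using m c2 by simp
  obtain C where C: "\<And>u v. m / c2 \<le> norm u \<Longrightarrow> norm u \<le> M / c1 \<Longrightarrow>
      \<phi> v \<le> \<phi> u + g u \<bullet> (v - u) + C * (norm (v - u))^2"
    using quadratic_upper_bound_on_annulus[OF lip f' g' H \<open>0 < m / c2\<close>] by blast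
  show ?thesis
  proof (rule that[where g=g and C="max C 1"])
    fix u v assume u: "m \<le> \<phi> u" "\<phi> u \<le> M"
    have "m / c2 \<le> norm u" "norm u \<le> M / c1"
      using u c1 c2 order_trans[OF u(1) upper] order_trans[OF lower u(2)]
      by (simp_all add: divide_le_eq le_divide_eq mult.commute)
    then have "\<phi> v \<le> \<phi> u + g u \<bullet> (v - u) + C * (norm (v - u))^2" by (rule C)
    then show "\<phi> v \<le> \<phi> u + g u \<bullet> (v - u) + max C 1 * (norm (v - u))^2"
      using mult_right_mono[of C "max C 1" "(norm (v - u))^2"] by simp
  qed simp
qed

lemma delta_le: "is_norm \<phi> \<Longrightarrow> a \<in> K \<Longrightarrow> delta \<phi> K y \<le> \<phi> (a - y)"
  unfolding delta_def
  by (rule cInf_lower) (auto intro: bdd_belowI[where m=0] simp: is_norm_nonneg)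

lemma delta_triangle:
  assumes N: "is_norm \<phi>" and "K \<noteq> {}"
  shows "delta \<phi> K b - \<phi> (y - b) \<le> delta \<phi> K y"
proof -
  have "delta \<phi> K b - \<phi> (y - b) \<le> \<phi> (a - y)" if "a \<in> K" for a
    using delta_le[OF N that, of b] is_norm_triangle[OF N, of "a - y" "y - b"] by simp
  then show ?thesis
    unfolding delta_def using assms(2) by (intro cInf_greatest) auto
qed

lemma delta_on_normal_segment:
  assumes N: "is_norm \<phi>" and a: "a \<in> K" and \<eta>: "\<phi> \<eta> = 1"
    and R: "delta \<phi> K (a + R *\<^sub>R \<eta>) = R" and r: "0 \<le> r" "r \<le> R"
  shows "delta \<phi> K (a + r *\<^sub>R \<eta>) = r"
proof (rule antisym)
  have "delta \<phi> K (a + r *\<^sub>R \<eta>) \<le> \<phi> (a - (a + r *\<^sub>R \<eta>))"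
    by (rule delta_le[OF N a])
  also have "\<dots> = r"
    using r \<eta> is_norm_scaleR[OF N, of "- r" \<eta>] by simp
  finally show "delta \<phi> K (a + r *\<^sub>R \<eta>) \<le> r" .
  have "\<phi> ((a + r *\<^sub>R \<eta>) - (a + R *\<^sub>R \<eta>)) = R - r"
    using r \<eta> is_norm_scaleR[OF N, of "r - R" \<eta>] by (simp add: algebra_simps)
  then show "r \<le> delta \<phi> K (a + r *\<^sub>R \<eta>)"
    using delta_triangle[OF N, of K "a + R *\<^sub>R \<eta>" "a + r *\<^sub>R \<eta>"] a R by auto
qed

lemma delta_quadratic_approx_on_normal_segment:
  fixes \<phi> :: "real^'n \<Rightarrow> real"
  assumes N: "is_norm \<phi>"
    and upper: "\<And>u v. m \<le> \<phi> u \<Longrightarrow> \<phi> u \<le> M \<Longrightarrow>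
      \<phi> v \<le> \<phi> u + g u \<bullet> (v - u) + C * (norm (v - u))^2"
    and a: "a \<in> K" and \<eta>: "\<phi> \<eta> = 1" and R: "delta \<phi> K (a + R *\<^sub>R \<eta>) = R"
    and m: "0 < m" and \<rho>: "m \<le> \<rho>" "\<rho> \<le> M" "m \<le> R - \<rho>" "R - \<rho> \<le> M"
  defines "x \<equiv> a + \<rho> *\<^sub>R \<eta>"
  shows "\<bar>delta \<phi> K y - delta \<phi> K x - g (\<rho> *\<^sub>R \<eta>) \<bullet> (y - x)\<bar> \<le> C * (norm (y - x))^2"
proof (rule quadratic_sandwich)
  define b where "b = a + R *\<^sub>R \<eta>"
  have dx: "delta \<phi> K x = \<rho>"
    unfolding x_def using delta_on_normal_segment[OF N a \<eta> R] m \<rho> by simp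
  have xa: "\<phi> (x - a) = \<rho>" and xb: "\<phi> (x - b) = R - \<rho>"
    using m \<rho> \<eta> is_norm_scaleR[OF N, of \<rho> \<eta>] is_norm_scaleR[OF N, of "\<rho> - R" \<eta>]
    by (simp_all add: x_def b_def algebra_simps)
  show "delta \<phi> K y' \<le> delta \<phi> K x + g (\<rho> *\<^sub>R \<eta>) \<bullet> (y' - x) + C * (norm (y' - x))^2" for y'
  proof -
    have "delta \<phi> K y' \<le> \<phi> (y' - a)"
      using delta_le[OF N a] is_norm_minus_commute[OF N] by metis
    also have "\<dots> \<le> \<phi> (x - a) + g (x - a) \<bullet> ((y' - a) - (x - a)) + C * (norm ((y' - a) - (x - a)))^2"
      using xa \<rho> by (intro upper) auto
    finally show ?thesis
      using xa dx by (simp add: x_def diff_diff_add)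
  qed
  show "delta \<phi> K x + (- g (x - b)) \<bullet> (y' - x) - C * (norm (y' - x))^2 \<le> delta \<phi> K y'" for y'
  proof -
    have "\<phi> (y' - b) \<le> \<phi> (x - b) + g (x - b) \<bullet> ((y' - b) - (x - b)) + C * (norm ((y' - b) - (x - b)))^2"
      using xb \<rho> by (intro upper) auto
    moreover have "delta \<phi> K b - \<phi> (y' - b) \<le> delta \<phi> K y'"
      using a by (intro delta_triangle[OF N]) auto
    ultimately show ?thesis
      using R xb dx by (simp add: b_def)
  qed
qed

lemma delta_quadratic_approx_on_Kset:
  fixes \<phi> :: "real^'n \<Rightarrow> real"
  assumes N: "is_norm \<phi>" and C2: "C2_on \<phi> (- {0})" and \<sigma>: "1 < \<sigma>" and s: "0 < s"
  obtains C where "0 \<le> C" "\<And>x. x \<in> Kset \<phi> K \<sigma> s t \<Longrightarrow>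
      \<exists>G. \<forall>y. \<bar>delta \<phi> K y - delta \<phi> K x - G \<bullet> (y - x)\<bar> \<le> C * (norm (y - x))^2"
proof -
  define \<tau> where "\<tau> = (\<sigma> - 1) / 2"
  have \<tau>: "0 < \<tau>" "1 + \<tau> < \<sigma>" using \<sigma> by (simp_all add: \<tau>_def field_simps)
  define m where "m = min s (\<tau> * s)"
  define M where "M = max t (\<tau> * t)"
  have m: "0 < m" using s \<tau> by (simp add: m_def)
  obtain g C where C: "0 < C" and upper: "\<And>u v. m \<le> \<phi> u \<Longrightarrow> \<phi> u \<le> M \<Longrightarrow>
      \<phi> v \<le> \<phi> u + g u \<bullet> (v - u) + C * (norm (v - u))^2"
    using is_norm_quadratic_upper_bound[OF N C2 m, where M = M] by metis
  show ?thesis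
  proof (rule that[of C])
    show "0 \<le> C" using C by simp
    fix x assume "x \<in> Kset \<phi> K \<sigma> s t"
    then obtain a \<eta> \<rho> where x: "x = a + \<rho> *\<^sub>R \<eta>" and a: "a \<in> K" and \<eta>: "\<phi> \<eta> = 1"
      and \<rho>: "s \<le> \<rho>" "\<rho> \<le> t" and reach: "ereal (\<sigma> * \<rho>) \<le> reach \<phi> K a \<eta>"
      unfolding Kset_def normal_bundle_def by blast
    have "ereal ((1 + \<tau>) * \<rho>) < ereal (\<sigma> * \<rho>)"
      using \<tau> \<rho> s by simp
    also note reach
    finally have "ereal ((1 + \<tau>) * \<rho>) < reach \<phi> K a \<eta>" .
    then obtain R where R: "(1 + \<tau>) * \<rho> < R" "delta \<phi> K (a + R *\<^sub>R \<eta>) = R"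
      unfolding reach_def by (auto simp: less_Sup_iff)
    have outer: "delta \<phi> K (a + ((1 + \<tau>) * \<rho>) *\<^sub>R \<eta>) = (1 + \<tau>) * \<rho>"
      using R \<tau> \<rho> s by (intro delta_on_normal_segment[OF N a \<eta> R(2)]) auto
    have "\<tau> * s \<le> \<tau> * \<rho>" "\<tau> * \<rho> \<le> \<tau> * t"
      using \<tau> \<rho> by simp_all
    then have "m \<le> (1 + \<tau>) * \<rho> - \<rho>" "(1 + \<tau>) * \<rho> - \<rho> \<le> M"
      by (simp_all add: m_def M_def algebra_simps)
    moreover have "m \<le> \<rho>" "\<rho> \<le> M"
      using \<rho> by (simp_all add: m_def M_def)
    ultimately have "\<forall>y. \<bar>delta \<phi> K y - delta \<phi> K x - g (\<rho> *\<^sub>R \<eta>) \<bullet> (y - x)\<bar> \<le> C * (norm (y - x))^2"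
      unfolding x by (blast intro: delta_quadratic_approx_on_normal_segment[OF N upper a \<eta> outer m])
    then show "\<exists>G. \<forall>y. \<bar>delta \<phi> K y - delta \<phi> K x - G \<bullet> (y - x)\<bar> \<le> C * (norm (y - x))^2" ..
  qed
qed

theorem theorem1p4:
  fixes \<phi> :: "real^'n \<Rightarrow> real" and K :: "(real^'n) set" and \<sigma> s t :: real
  assumes "uniformly_convex_norm \<phi>"
    and "C2_on \<phi> (- {0})"
    and "closed K"
    and "1 < \<sigma>" and "0 < s" and "s < t"
  shows "(\<forall>x\<in>Kset \<phi> K \<sigma> s t. delta \<phi> K differentiable (at x)) \<and>
         (\<exists>(G :: real^'n \<Rightarrow> real^'n) L.
            (\<forall>x\<in>Kset \<phi> K \<sigma> s t. (delta \<phi> K has_derivative (\<lambda>h. G x \<bullet> h)) (at x)) \<and>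
            L-lipschitz_on (Kset \<phi> K \<sigma> s t) G)"
proof -
  have N: "is_norm \<phi>"
    using assms(1) by (simp add: uniformly_convex_norm_def)
  obtain C where C: "0 \<le> C" and "\<And>x. x \<in> Kset \<phi> K \<sigma> s t \<Longrightarrow>
      \<exists>G. \<forall>y. \<bar>delta \<phi> K y - delta \<phi> K x - G \<bullet> (y - x)\<bar> \<le> C * (norm (y - x))^2"
    using delta_quadratic_approx_on_Kset[OF N assms(2,4,5)] by metis
  then obtain G where G: "\<And>x y. x \<in> Kset \<phi> K \<sigma> s t \<Longrightarrow>
      \<bar>delta \<phi> K y - delta \<phi> K x - G x \<bullet> (y - x)\<bar> \<le> C * (norm (y - x))^2"
    by metis
  have "\<forall>x\<in>Kset \<phi> K \<sigma> s t. (delta \<phi> K has_derivative (\<lambda>h. G x \<bullet> h)) (at x)"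
    using G by (blast intro: has_derivative_if_quadratic_approx)
  moreover have "(6 * C)-lipschitz_on (Kset \<phi> K \<sigma> s t) G"
    using G C by (rule lipschitz_on_if_quadratic_approx)
  ultimately show ?thesis
    unfolding differentiable_def by blast
qed

end
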